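(* Cycle-CTL* (CTL*$_{cd}$) has neither the finite-model property nor the tree-model property, and it is not invariant under (ordinary) bisimulation. Precisely: (1) there is a satisfiable CTL*$_{cd}$ state formula that is not satisfied by any Kripke structure with finitely many worlds; (2) there is a satisfiable CTL*$_{cd}$ state formula $\varphi$ such that $\mathcal K\not\models\varphi$ for every Kripke structure $\mathcal K$ whose transition graph $(W,R)$ is a tree with root $w_I$; (3) there are Kripke structures $\mathcal K_1,\mathcal K_2$ and a bisimulation between them, and a CTL*$_{cd}$ state formula $\varphi$, such that $\mathcal K_1\models\varphi$ and $\mathcal K_2\not\models\varphi$.
   Context: A Kripke structure over a finite set $AP$ of atomic propositions is a tuple $\mathcal K=(AP,W,R,L,w_I)$ where $W$ is a countable non-empty set of worlds, $w_I\in W$ is the initial world, $R\subseteq W\times W$ is a left-total transition relation (every world has at least one $R$-successor), and $L:W\to 2^{AP}$ is a labelling function. A path is an infinite sequence $\pi=\pi_0\pi_1\cdots$ of worlds with $(\pi_i,\pi_{i+1})\in R$ for all $i\in\mathbb N$; $\mathrm{Pth}(w)$ is the set of paths with $\pi_0=w$. A path $\pi$ is a cycle if for every $i\in\mathbb N$ there is $j>i$ with $\pi_j=\pi_0$ (i.e. $\pi_0$ occurs infinitely often in $\pi$); $\mathrm{Cyc}(w)$ is the set of cycles with $\pi_0=w$. Syntax of CTL*$_{cd}$: state formulas $\varphi::=p\mid\neg\varphi\mid\varphi\wedge\varphi\mid\varphi\vee\varphi\mid \mathsf E\psi\mid\mathsf A\psi\mid\mathsf E^{c}\psi\mid\mathsf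 A^{c}\psi$ with $p\in AP$; path formulas $\psi::=\varphi\mid\neg\psi\mid\psi\wedge\psi\mid\psi\vee\psi\mid\mathsf X\psi\mid\psi\,\mathsf U\,\psi$. Semantics: $\mathcal K,w\models p$ iff $p\in L(w)$; Boolean connectives as usual; $\mathcal K,w\models\mathsf E\psi$ iff some $\pi\in\mathrm{Pth}(w)$ has $\mathcal K,\pi,0\models\psi$; $\mathcal K,w\models\mathsf A\psi$ iff every $\pi\in\mathrm{Pth}(w)$ has $\mathcal K,\pi,0\models\psi$; $\mathcal K,w\models\mathsf E^{c}\psi$ iff some $\pi\in\mathrm{Cyc}(w)$ has $\mathcal K,\pi,0\models\psi$; $\mathcal K,w\models\mathsf A^{c}\psi$ iff every $\pi\in\mathrm{Cyc}(w)$ has $\mathcal K,\pi,0\models\psi$. For paths: $\mathcal K,\pi,i\models\varphi$ (state formula) iff $\mathcal K,\pi_i\models\varphi$; Boolean connectives as usual; $\mathcal K,\pi,i\models\mathsf X\psi$ iff $\mathcal K,\pi,i+1\models\psi$; $\mathcal K,\pi,i\models\psi_1\mathsf U\psi_2$ iff there is $k\ge0$ with $\mathcal K,\pi,i+k\models\psi_2$ and $\mathcal K,\pi,i+j\models\psi_1$ for all $0\le j<k$. $\mathcal K\models\varphi$ iff $\mathcal K,w_I\models\varphi$. A state formula is satisfiable if $\mathcal K\models\varphi$ for some Kripke structure $\mathcal K$. CTL* is the fragment without $\mathsf E^c,\mathsf A^c$. A bisimulation between $\mathcal K_1=(AP,W_1,R_1,L_1,w_{I,1})$ and $\mathcal K_2=(AP,W_2,R_2,L_2,w_{I,2})$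 is a relation $B\subseteq W_1\times W_2$ with $(w_{I,1},w_{I,2})\in B$ such that for all $(w_1,w_2)\in B$: $L_1(w_1)=L_2(w_2)$; for every $R_1$-successor $v_1$ of $w_1$ there is an $R_2$-successor $v_2$ of $w_2$ with $(v_1,v_2)\in B$; and for every $R_2$-successor $v_2$ of $w_2$ there is an $R_1$-successor $v_1$ of $w_1$ with $(v_1,v_2)\in B$. *)

theory Defs
  imports Main
begin

(* Kripke structures over atomic propositions of type 'p.  Worlds are natural
   numbers: every countable non-empty world set is in bijection with a subset of nat. *)
record 'p kripke =
  AP :: "'p set"
  W  :: "nat set"
  R  :: "(nat \<times> nat) set"
  L  :: "nat \<Rightarrow> 'p set"
  wI :: nat

definition kripke :: "'p kripke \<Rightarrow> bool" where
  "kripke K \<longleftrightarrow> finite (AP K) \<and> W K \<noteq> {} \<and> wI K \<in> W K \<and> R K \<subseteq> W K \<times> W K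
     \<and> (\<forall>w\<in>W K. \<exists>v. (w, v) \<in> R K) \<and> (\<forall>w\<in>W K. L K w \<subseteq> AP K)"

definition is_path :: "'p kripke \<Rightarrow> (nat \<Rightarrow> nat) \<Rightarrow> bool" where
  "is_path K \<pi> \<longleftrightarrow> (\<forall>i. (\<pi> i, \<pi> (Suc i)) \<in> R K)"

definition Pth :: "'p kripke \<Rightarrow> nat \<Rightarrow> (nat \<Rightarrow> nat) set" where
  "Pth K w = {\<pi>. is_path K \<pi> \<and> \<pi> 0 = w}"

definition is_cycle :: "'p kripke \<Rightarrow> (nat \<Rightarrow> nat) \<Rightarrow> bool" where
  "is_cycle K \<pi> \<longleftrightarrow> is_path K \<pi> \<and> (\<forall>i. \<exists>j>i. \<pi> j = \<pi> 0)"

definition Cyc :: "'p kripke \<Rightarrow> nat \<Rightarrow> (nat \<Rightarrow> nat) set" where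
  "Cyc K w = {\<pi>. is_cycle K \<pi> \<and> \<pi> 0 = w}"

datatype 'p sform =
    Prop 'p
  | SNot "'p sform"
  | SAnd "'p sform" "'p sform"
  | SOr "'p sform" "'p sform"
  | Ex "'p pform"
  | All "'p pform"
  | ExC "'p pform"
  | AllC "'p pform"
and 'p pform =
    State "'p sform"
  | PNot "'p pform"
  | PAnd "'p pform" "'p pform"
  | POr "'p pform" "'p pform"
  | Next "'p pform"
  | Until "'p pform" "'p pform"

fun satS :: "'p kripke \<Rightarrow> nat \<Rightarrow> 'p sform \<Rightarrow> bool"
and satP :: "'p kripke \<Rightarrow> (nat \<Rightarrow> nat) \<Rightarrow> nat \<Rightarrow> 'p pform \<Rightarrow> bool" where
  "satS K w (Prop p) \<longleftrightarrow> p \<in> L K w"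
| "satS K w (SNot \<phi>) \<longleftrightarrow> \<not> satS K w \<phi>"
| "satS K w (SAnd \<phi> \<psi>) \<longleftrightarrow> satS K w \<phi> \<and> satS K w \<psi>"
| "satS K w (SOr \<phi> \<psi>) \<longleftrightarrow> satS K w \<phi> \<or> satS K w \<psi>"
| "satS K w (Ex \<psi>) \<longleftrightarrow> (\<exists>\<pi>\<in>Pth K w. satP K \<pi> 0 \<psi>)"
| "satS K w (All \<psi>) \<longleftrightarrow> (\<forall>\<pi>\<in>Pth K w. satP K \<pi> 0 \<psi>)"
| "satS K w (ExC \<psi>) \<longleftrightarrow> (\<exists>\<pi>\<in>Cyc K w. satP K \<pi> 0 \<psi>)"
| "satS K w (AllC \<psi>) \<longleftrightarrow> (\<forall>\<pi>\<in>Cyc K w. satP K \<pi> 0 \<psi>)"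
| "satP K \<pi> i (State \<phi>) \<longleftrightarrow> satS K (\<pi> i) \<phi>"
| "satP K \<pi> i (PNot \<psi>) \<longleftrightarrow> \<not> satP K \<pi> i \<psi>"
| "satP K \<pi> i (PAnd \<psi>1 \<psi>2) \<longleftrightarrow> satP K \<pi> i \<psi>1 \<and> satP K \<pi> i \<psi>2"
| "satP K \<pi> i (POr \<psi>1 \<psi>2) \<longleftrightarrow> satP K \<pi> i \<psi>1 \<or> satP K \<pi> i \<psi>2"
| "satP K \<pi> i (Next \<psi>) \<longleftrightarrow> satP K \<pi> (Suc i) \<psi>"
| "satP K \<pi> i (Until \<psi>1 \<psi>2) \<longleftrightarrow>
     (\<exists>k. satP K \<pi> (i + k) \<psi>2 \<and> (\<forall>j<k. satP K \<pi> (i + j) \<psi>1))"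

definition models :: "'p kripke \<Rightarrow> 'p sform \<Rightarrow> bool" where
  "models K \<phi> \<longleftrightarrow> satS K (wI K) \<phi>"

fun atomsS :: "'p sform \<Rightarrow> 'p set"
and atomsP :: "'p pform \<Rightarrow> 'p set" where
  "atomsS (Prop p) = {p}"
| "atomsS (SNot \<phi>) = atomsS \<phi>"
| "atomsS (SAnd \<phi> \<psi>) = atomsS \<phi> \<union> atomsS \<psi>"
| "atomsS (SOr \<phi> \<psi>) = atomsS \<phi> \<union> atomsS \<psi>"
| "atomsS (Ex \<psi>) = atomsP \<psi>"
| "atomsS (All \<psi>) = atomsP \<psi>"
| "atomsS (ExC \<psi>) = atomsP \<psi>"
| "atomsS (AllC \<psi>) = atomsP \<psi>"
| "atomsP (State \<phi>) = atomsS \<phi>"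
| "atomsP (PNot \<psi>) = atomsP \<psi>"
| "atomsP (PAnd \<psi>1 \<psi>2) = atomsP \<psi>1 \<union> atomsP \<psi>2"
| "atomsP (POr \<psi>1 \<psi>2) = atomsP \<psi>1 \<union> atomsP \<psi>2"
| "atomsP (Next \<psi>) = atomsP \<psi>"
| "atomsP (Until \<psi>1 \<psi>2) = atomsP \<psi>1 \<union> atomsP \<psi>2"

definition over_AP :: "'p set \<Rightarrow> 'p sform \<Rightarrow> bool" where
  "over_AP Ap \<phi> \<longleftrightarrow> atomsS \<phi> \<subseteq> Ap"

definition satisfiable_over :: "'p set \<Rightarrow> 'p sform \<Rightarrow> bool" where
  "satisfiable_over Ap \<phi> \<longleftrightarrow> (\<exists>K. kripke K \<and> AP K = Ap \<and> models K \<phi>)"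

definition is_tree :: "'p kripke \<Rightarrow> bool" where
  "is_tree K \<longleftrightarrow> (\<forall>w\<in>W K. (wI K, w) \<in> (R K)\<^sup>*)
     \<and> (\<forall>v. (v, wI K) \<notin> R K)
     \<and> (\<forall>w\<in>W K - {wI K}. \<exists>!v. (v, w) \<in> R K)"

definition bisimulation :: "'p kripke \<Rightarrow> 'p kripke \<Rightarrow> (nat \<times> nat) set \<Rightarrow> bool" where
  "bisimulation K1 K2 B \<longleftrightarrow> B \<subseteq> W K1 \<times> W K2 \<and> (wI K1, wI K2) \<in> B \<and>
     (\<forall>(w1, w2)\<in>B. L K1 w1 = L K2 w2
        \<and> (\<forall>v1. (w1, v1) \<in> R K1 \<longrightarrow> (\<exists>v2. (w2, v2) \<in> R K2 \<and> (v1, v2) \<in> B))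
        \<and> (\<forall>v2. (w2, v2) \<in> R K2 \<longrightarrow> (\<exists>v1. (w1, v1) \<in> R K1 \<and> (v1, v2) \<in> B)))"

end

theory Submission
  imports Defs
begin

text \<open>All three properties are witnessed by the formula \<open>E\<^sup>c \<top>\<close> ("the current world lies on a
cycle") and the infinite successor chain \<open>0 \<rightarrow> 1 \<rightarrow> 2 \<rightarrow> \<dots>\<close>, which has no cycle at all.
\<open>AG \<not>E\<^sup>c \<top>\<close> holds in the chain, but every infinite path through finitely many worlds repeats a
world and thereby passes through a cycle.  \<open>E\<^sup>c \<top>\<close> holds in a single world with a self-loop,
but never at the root of a tree, which has no predecessor.  Finally, the self-loop and the chain
are bisimilar, yet only the former satisfies \<open>E\<^sup>c \<top>\<close>.\<close>

definition top_form :: "nat sform" where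
  "top_form = SOr (Prop 0) (SNot (Prop 0))"

definition on_cycle :: "nat sform" where
  "on_cycle = ExC (State top_form)"

definition globally_not_on_cycle :: "nat sform" where
  "globally_not_on_cycle = All (PNot (Until (State top_form) (State on_cycle)))"

lemma over_AP_on_cycle: "over_AP {0} on_cycle"
  by (simp add: over_AP_def on_cycle_def top_form_def)

lemma over_AP_globally_not_on_cycle: "over_AP {0} globally_not_on_cycle"
  by (simp add: over_AP_def globally_not_on_cycle_def on_cycle_def top_form_def)

lemma satS_on_cycle_iff: "satS K w on_cycle \<longleftrightarrow> Cyc K w \<noteq> {}"
  by (auto simp: on_cycle_def top_form_def)

lemma satS_globally_not_on_cycle_iff:
  "satS K w globally_not_on_cycle \<longleftrightarrow> (\<forall>\<pi>\<in>Pth K w. \<forall>k. Cyc K (\<pi> k) = {})"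
  unfolding globally_not_on_cycle_def by (simp add: satS_on_cycle_iff top_form_def)

lemma path_in_worlds:
  assumes "kripke K" "is_path K \<pi>" "\<pi> 0 \<in> W K"
  shows "\<pi> n \<in> W K"
proof (cases n)
  case (Suc m)
  then show ?thesis using assms by (auto simp: kripke_def is_path_def)
qed (use assms in simp)

lemma Pth_nonempty:
  assumes K: "kripke K" and w: "w \<in> W K"
  shows "Pth K w \<noteq> {}"
proof -
  obtain f where f: "\<And>v. v \<in> W K \<Longrightarrow> (v, f v) \<in> R K"
    using K by (metis kripke_def)
  have f_W: "\<And>v. v \<in> W K \<Longrightarrow> f v \<in> W K"
    using K f by (auto simp: kripke_def)
  have iter_W: "(f ^^ n) w \<in> W K" for n
    by (induction n) (use w f_W in auto)
  have "(\<lambda>n. (f ^^ n) w) \<in> Pth K w"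
    using f iter_W by (simp add: Pth_def is_path_def)
  then show ?thesis by blast
qed

text \<open>Winding around the segment \<open>\<pi> i, \<dots>, \<pi> (j - 1)\<close> forever.\<close>

lemma Cyc_nonempty_if_path_repeats:
  assumes path: "is_path K \<pi>" and "i < j" and repeat: "\<pi> i = \<pi> j"
  shows "Cyc K (\<pi> i) \<noteq> {}"
proof -
  define d where "d = j - i"
  have d: "0 < d" "i + d = j" using \<open>i < j\<close> by (auto simp: d_def)
  define c where "c = (\<lambda>k. \<pi> (i + k mod d))"
  have "(c k, c (Suc k)) \<in> R K" for k
  proof (cases "Suc (k mod d) = d")
    case True
    then have "Suc (i + k mod d) = j" using d by simp
    then have "c (Suc k) = \<pi> (Suc (i + k mod d))"
      using True repeat by (simp add: c_def mod_Suc)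
    then show ?thesis using path by (simp add: c_def is_path_def)
  next
    case False
    then show ?thesis using path by (simp add: c_def mod_Suc is_path_def)
  qed
  moreover have "\<exists>m>n. c m = c 0" for n
  proof (intro exI conjI)
    show "n < d * Suc n" using d(1) by (cases d) auto
    show "c (d * Suc n) = c 0" by (simp add: c_def)
  qed
  ultimately have "c \<in> Cyc K (\<pi> i)"
    by (simp add: Cyc_def is_cycle_def is_path_def c_def)
  then show ?thesis by blast
qed

lemma path_through_finite_worlds_meets_cycle:
  assumes K: "kripke K" and fin: "finite (W K)" and \<pi>: "\<pi> \<in> Pth K w" and w: "w \<in> W K"
  shows "\<exists>i. Cyc K (\<pi> i) \<noteq> {}"
proof -
  have path: "is_path K \<pi>" and start: "\<pi> 0 \<in> W K" using \<pi> w by (auto simp: Pth_def)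
  have "range \<pi> \<subseteq> W K" using path_in_worlds[OF K path start] by auto
  then have "\<not> inj \<pi>"
    using fin finite_subset finite_imageD infinite_UNIV_nat by blast
  then obtain i j where "i < j" "\<pi> i = \<pi> j"
    unfolding inj_def by (metis linorder_neqE_nat)
  then show ?thesis using Cyc_nonempty_if_path_repeats path by blast
qed

lemma Cyc_returns:
  assumes "\<pi> \<in> Cyc K w"
  shows "is_path K \<pi> \<and> \<pi> 0 = w \<and> (\<exists>j>0. \<pi> j = w)"
  using assms by (auto simp: Cyc_def is_cycle_def dest: spec[of _ 0])

lemma Cyc_empty_if_no_predecessor:
  assumes "\<forall>v. (v, w) \<notin> R K"
  shows "Cyc K w = {}"
proof (rule ccontr)
  assume "Cyc K w \<noteq> {}"
  then obtain \<pi> where "\<pi> \<in> Cyc K w" by blast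
  from Cyc_returns[OF this] obtain j where "is_path K \<pi>" "0 < j" "\<pi> j = w"
    by auto
  moreover obtain m where "j = Suc m" using \<open>0 < j\<close> gr0_implies_Suc by blast
  ultimately have "(\<pi> m, w) \<in> R K" by (metis is_path_def)
  with assms show False by blast
qed

lemma tree_root_not_on_cycle: "is_tree K \<Longrightarrow> Cyc K (wI K) = {}"
  by (rule Cyc_empty_if_no_predecessor) (simp add: is_tree_def)

definition chain :: "nat kripke" where
  "chain = \<lparr>AP = {0}, W = UNIV, R = {(n, Suc n) | n. True}, L = (\<lambda>_. {}), wI = 0\<rparr>"

definition self_loop :: "nat kripke" where
  "self_loop = \<lparr>AP = {0}, W = {0}, R = {(0, 0)}, L = (\<lambda>_. {}), wI = 0\<rparr>"

lemma kripke_chain: "kripke chain"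
  by (auto simp: kripke_def chain_def)

lemma kripke_self_loop: "kripke self_loop"
  by (auto simp: kripke_def self_loop_def)

lemma chain_path_shift:
  assumes "is_path chain \<pi>"
  shows "\<pi> k = \<pi> 0 + k"
proof (induction k)
  case (Suc k)
  have "(\<pi> k, \<pi> (Suc k)) \<in> R chain" using assms by (simp add: is_path_def)
  with Suc show ?case by (simp add: chain_def)
qed simp

lemma Cyc_chain_empty: "Cyc chain w = {}"
proof (rule ccontr)
  assume "Cyc chain w \<noteq> {}"
  then obtain \<pi> where "\<pi> \<in> Cyc chain w" by blast
  from Cyc_returns[OF this] obtain j where "is_path chain \<pi>" "0 < j" "\<pi> j = \<pi> 0"
    by auto
  then show False using chain_path_shift[of \<pi> j] by simp
qed

lemma Cyc_self_loop_nonempty: "Cyc self_loop 0 \<noteq> {}"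
proof -
  have "(\<lambda>_. 0) \<in> Cyc self_loop 0"
    by (auto simp: Cyc_def is_cycle_def is_path_def self_loop_def intro: exI[of _ "Suc _"])
  then show ?thesis by blast
qed

lemma models_self_loop_on_cycle: "models self_loop on_cycle"
  using Cyc_self_loop_nonempty by (simp add: models_def satS_on_cycle_iff self_loop_def)

lemma bisimulation_self_loop_chain: "bisimulation self_loop chain ({0} \<times> UNIV)"
  by (auto simp: bisimulation_def self_loop_def chain_def)

lemma no_finite_model_property:
  "\<exists>Ap :: nat set. \<exists>\<phi>. finite Ap \<and> over_AP Ap \<phi> \<and> satisfiable_over Ap \<phi> \<and>
     (\<forall>K. kripke K \<and> AP K = Ap \<and> finite (W K) \<longrightarrow> \<not> models K \<phi>)"
proof (intro exI[of _ "{0}"] exI[of _ globally_not_on_cycle] conjI allI impI)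
  show "satisfiable_over {0} globally_not_on_cycle"
    using kripke_chain Cyc_chain_empty
    by (auto simp: satisfiable_over_def models_def satS_globally_not_on_cycle_iff chain_def)
  fix K :: "nat kripke"
  assume K: "kripke K \<and> AP K = {0} \<and> finite (W K)"
  then have root: "wI K \<in> W K" by (simp add: kripke_def)
  then obtain \<pi> where \<pi>: "\<pi> \<in> Pth K (wI K)" using K Pth_nonempty by blast
  have "\<exists>i. Cyc K (\<pi> i) \<noteq> {}"
    using K root \<pi> by (intro path_through_finite_worlds_meets_cycle) simp_all
  then obtain i where "Cyc K (\<pi> i) \<noteq> {}" by blast
  with \<pi> show "\<not> models K globally_not_on_cycle"
    by (auto simp: models_def satS_globally_not_on_cycle_iff)
qed (simp_all add: over_AP_globally_not_on_cycle)

lemma no_tree_model_property: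
  "\<exists>Ap :: nat set. \<exists>\<phi>. finite Ap \<and> over_AP Ap \<phi> \<and> satisfiable_over Ap \<phi> \<and>
     (\<forall>K. kripke K \<and> AP K = Ap \<and> is_tree K \<longrightarrow> \<not> models K \<phi>)"
proof (intro exI[of _ "{0}"] exI[of _ on_cycle] conjI allI impI)
  show "satisfiable_over {0} on_cycle"
    using kripke_self_loop models_self_loop_on_cycle
    by (auto simp: satisfiable_over_def self_loop_def)
qed (auto simp: over_AP_on_cycle models_def satS_on_cycle_iff tree_root_not_on_cycle)

lemma not_bisimulation_invariant:
  "\<exists>(K1 :: nat kripke) K2 B \<phi>. kripke K1 \<and> kripke K2 \<and> AP K1 = AP K2 \<and>
     over_AP (AP K1) \<phi> \<and> bisimulation K1 K2 B \<and> models K1 \<phi> \<and> \<not> models K2 \<phi>"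
proof (rule exI[of _ self_loop], rule exI[of _ chain], rule exI[of _ "{0} \<times> UNIV"],
    rule exI[of _ on_cycle], intro conjI)
  show "\<not> models chain on_cycle"
    using Cyc_chain_empty by (simp add: models_def satS_on_cycle_iff)
qed (use kripke_self_loop kripke_chain bisimulation_self_loop_chain models_self_loop_on_cycle
       over_AP_on_cycle in \<open>simp_all add: self_loop_def chain_def\<close>)

theorem mainTheorem1:
  shows "(\<exists>Ap :: nat set. \<exists>\<phi>. finite Ap \<and> over_AP Ap \<phi> \<and> satisfiable_over Ap \<phi> \<and>
            (\<forall>K. kripke K \<and> AP K = Ap \<and> finite (W K) \<longrightarrow> \<not> models K \<phi>))
       \<and> (\<exists>Ap :: nat set. \<exists>\<phi>. finite Ap \<and> over_AP Ap \<phi> \<and> satisfiable_over Ap \<phi> \<and>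
            (\<forall>K. kripke K \<and> AP K = Ap \<and> is_tree K \<longrightarrow> \<not> models K \<phi>))
       \<and> (\<exists>(K1 :: nat kripke) K2 B \<phi>. kripke K1 \<and> kripke K2 \<and> AP K1 = AP K2 \<and>
            over_AP (AP K1) \<phi> \<and> bisimulation K1 K2 B \<and> models K1 \<phi> \<and> \<not> models K2 \<phi>)"
  by (intro conjI no_finite_model_property no_tree_model_property not_bisimulation_invariant)

end
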